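(* Let $\omega=SSw$ be an attack cycle starting with two letters S, where $w=w_1\cdots w_\nu$ with $w_\nu=H$, and let $X_0=0$, $X_i=X_{i-1}+1$ if $w_i=S$, $X_i=X_{i-1}-1$ if $w_i=H$. Let $H(\omega)$ be the number of indices $1\le i\le\nu$ with $X_i<n_1-2$ and $X_i<X_{i-1}$. Then $$\mathbb{E}[H(\omega)\mid \omega=SS\ldots]=\frac{p}{p-q}\Bigl(1-\Bigl(\frac qp\Bigr)^{n_1-1}\Bigr).$$
   Context: Honest hashrate $p$, attacker hashrate $q$, $p+q=1$, $0<q<p$; $n_1\ge 2$ is an integer (the maximal uncle–nephew distance in Ethereum). Attack cycles starting with SS are the words $SSw'H$ with $w'$ a Dyck word over $\{S,H\}$, with $\mathbb{P}[SSw'H]=q^2p(pq)^{|w'|}$ ($|w'|$ half the length of $w'$); equivalently, conditional on starting with SS, the path $(X_i)$ is a random walk from $0$ with up-steps of probability $q$ and down-steps of probability $p$, stopped at its first visit to $-1$ (at time $\nu$). *)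

theory Defs
  imports "HOL-Analysis.Analysis"
begin

text \<open>Letters of a block sequence: S (selfish/attacker block), H (honest block).\<close>
datatype letter = S | H

fun step :: "letter \<Rightarrow> int" where
  "step S = 1"
| "step H = -1"

definition height :: "letter list \<Rightarrow> int" where
  "height w = sum_list (map step w)"

definition dyck :: "letter list \<Rightarrow> bool" where
  "dyck w \<longleftrightarrow> (\<forall>i\<le>length w. height (take i w) \<ge> 0) \<and> height w = 0"

definition SS_cycles :: "letter list set" where
  "SS_cycles = {[S, S] @ w' @ [H] | w'. dyck w'}"

definition cycle_prob :: "real \<Rightarrow> real \<Rightarrow> letter list \<Rightarrow> real" where
  "cycle_prob p q \<omega> = q^2 * p * (p * q) ^ ((length \<omega> - 3) div 2)"

text \<open>For \<omega> = SS w with w = w_1 ... w_\<nu>: X_i is the height of the first i letters of w.\<close>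
definition Xpos :: "letter list \<Rightarrow> nat \<Rightarrow> int" where
  "Xpos \<omega> i = height (take i (drop 2 \<omega>))"

definition Hcount :: "nat \<Rightarrow> letter list \<Rightarrow> nat" where
  "Hcount n1 \<omega> = card {i \<in> {1..length \<omega> - 2}.
      Xpos \<omega> i < int n1 - 2 \<and> Xpos \<omega> i < Xpos \<omega> (i - 1)}"

end

theory Submission
  imports Defs
begin

text \<open>After the prefix SS, an attack cycle is a first passage \<open>w\<close> of the \<open>\<plusminus>1\<close> walk from
  \<open>0\<close> to \<open>-1\<close>, of probability \<open>q\<^sup>2\<close> times the product of the letter weights (\<open>q\<close> for S, \<open>p\<close> for H).
  First passages decompose uniquely as \<open>H\<close> or \<open>S u v\<close> with first passages \<open>u\<close>, \<open>v\<close>, the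
  excursion \<open>u\<close> running one level higher. Hence their total weight solves \<open>\<Phi> = p + q \<Phi>\<^sup>2\<close>, so
  \<open>\<Phi> = 1\<close>, and the expected number \<open>E m\<close> of H-steps ending below level \<open>m\<close> satisfies
  \<open>E m = p [m \<ge> 0] + q E (m - 1) + q E m\<close> with \<open>E m = 0\<close> for \<open>m < 0\<close>. Thus
  \<open>E (n\<^sub>1 - 2) = \<Sum>k < n\<^sub>1 - 1. (q/p)\<^sup>k\<close>. Summability and \<open>\<Phi> \<le> 1\<close> come from bounding the sums over
  first passages of length at most \<open>N\<close> by induction on \<open>N\<close>.\<close>

lemma height_Nil [simp]: "height [] = 0"
  by (simp add: height_def)

lemma height_Cons [simp]: "height (x # w) = step x + height w"
  by (simp add: height_def)

lemma height_append [simp]: "height (u @ v) = height u + height v"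
  by (simp add: height_def)

lemma UNIV_letter: "(UNIV :: letter set) = {S, H}"
  using letter.exhaust by auto

lemma step_cases: "step x = 1 \<or> step x = -1"
  by (cases x) auto

text \<open>Discrete intermediate value property: the walk moves by unit steps.\<close>
lemma height_take_hits:
  assumes "n \<le> length w" "height (take n w) \<le> c" "c \<le> 0"
  shows "\<exists>k\<le>n. height (take k w) = c"
  using assms
proof (induction n)
  case (Suc n)
  show ?case
  proof (cases "height (take n w) \<le> c")
    case True
    then show ?thesis using Suc by (metis Suc_leD le_Suc_eq)
  next
    case False
    have "height (take (Suc n) w) = height (take n w) + step (w ! n)"
      using Suc.prems by (simp add: take_Suc_conv_app_nth)
    then have "height (take (Suc n) w) = c"
      using False Suc.prems step_cases[of "w ! n"] by auto
    then show ?thesis by blast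
  qed
qed auto

definition first_passage :: "letter list set" where
  "first_passage = {w. height w = -1 \<and> (\<forall>i<length w. 0 \<le> height (take i w))}"

lemma first_passage_eq_dyck: "first_passage = {w' @ [H] | w'. dyck w'}"
proof (intro equalityI subsetI)
  fix w assume "w \<in> first_passage"
  then have hw: "height w = -1" and pw: "\<And>i. i < length w \<Longrightarrow> 0 \<le> height (take i w)"
    by (simp_all add: first_passage_def)
  have "w \<noteq> []" using hw by auto
  then obtain b x where wb: "w = b @ [x]" using rev_exhaust by blast
  have "0 \<le> height b" using pw[of "length b"] wb by simp
  moreover have "height b + step x = -1" using hw wb by simp
  ultimately have "x = H" "height b = 0" by (cases x; simp)+
  moreover have "0 \<le> height (take i b)" if "i \<le> length b" for i
    using pw[of i] wb that by simp
  ultimately show "w \<in> {w' @ [H] | w'. dyck w'}" using wb by (auto simp: dyck_def)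
next
  fix w assume "w \<in> {w' @ [H] | w'. dyck w'}"
  then obtain w' where w: "w = w' @ [H]" "dyck w'" by blast
  have "0 \<le> height (take i w)" if "i < length w" for i
    using w that by (simp add: dyck_def)
  then show "w \<in> first_passage" using w by (simp add: first_passage_def dyck_def)
qed

lemma Nil_notin_first_passage: "[] \<notin> first_passage"
  by (simp add: first_passage_def)

lemma H_in_first_passage: "[H] \<in> first_passage"
  by (simp add: first_passage_def)

lemma height_first_passage: "w \<in> first_passage \<Longrightarrow> height w = -1"
  by (simp add: first_passage_def)

lemma join_in_first_passage:
  assumes "u \<in> first_passage" "v \<in> first_passage"
  shows "S # u @ v \<in> first_passage"
  unfolding first_passage_def
proof safe
  show "height (S # u @ v) = -1" using assms by (simp add: first_passage_def)
  fix i assume i: "i < length (S # u @ v)"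
  show "0 \<le> height (take i (S # u @ v))"
  proof (cases i)
    case (Suc j)
    have "height (take i (S # u @ v)) = 1 + height (take j u) + height (take (j - length u) v)"
      using Suc by (simp add: take_append)
    moreover have "0 \<le> height (take j u)" if "j < length u"
      using assms(1) that by (simp add: first_passage_def)
    moreover have "0 \<le> height (take (j - length u) v)" if "\<not> j < length u"
      using assms(2) that i Suc by (simp add: first_passage_def)
    ultimately show ?thesis
      using assms(1) by (cases "j < length u") (simp_all add: height_first_passage)
  qed simp
qed

text \<open>The shortest prefix reaching level \<open>-1\<close> is a first passage.\<close>
lemma first_passage_prefix:
  assumes "height w < 0"
  obtains u v where "w = u @ v" "u \<in> first_passage"
proof -
  have ex: "\<exists>k\<le>length w. height (take k w) = -1"
    using height_take_hits[of "length w" w "-1"] assms by simp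
  define k where "k = (LEAST k. k \<le> length w \<and> height (take k w) = -1)"
  have k: "k \<le> length w" "height (take k w) = -1"
    using LeastI_ex[OF ex[simplified Bex_def[symmetric]]] by (auto simp: k_def)
  have "0 \<le> height (take i w)" if ik: "i < k" for i
  proof (rule ccontr)
    assume "\<not> 0 \<le> height (take i w)"
    then obtain j where "j \<le> i" "height (take j w) = -1"
      using height_take_hits[of i w "-1"] ik k(1) by auto
    then have "k \<le> j" using ik k(1) unfolding k_def by (intro Least_le) auto
    then show False using \<open>j \<le> i\<close> ik by simp
  qed
  then have "take k w \<in> first_passage" using k by (simp add: first_passage_def)
  then show thesis using that[of "take k w" "drop k w"] by simp
qed

lemma first_passage_split:
  assumes "w \<in> first_passage" "w \<noteq> [H]"
  obtains u v where "u \<in> first_passage" "v \<in> first_passage" "w = S # u @ v"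
proof -
  have hw: "height w = -1" and pw: "\<And>i. i < length w \<Longrightarrow> 0 \<le> height (take i w)"
    using assms(1) by (auto simp: first_passage_def)
  obtain x r where w: "w = x # r" using assms(1) Nil_notin_first_passage by (cases w) auto
  have "x = S"
  proof (rule ccontr)
    assume "x \<noteq> S"
    then have "x = H" by (cases x) auto
    moreover have "1 < length w" using assms(2) w \<open>x = H\<close> by (cases r) auto
    ultimately show False using pw[of 1] w by simp
  qed
  then have "height r < 0" using hw w by simp
  then obtain u v where r: "r = u @ v" and u: "u \<in> first_passage"
    by (rule first_passage_prefix)
  have "v \<in> first_passage"
    unfolding first_passage_def
  proof safe
    show "height v = -1" using hw w r u \<open>x = S\<close> by (simp add: height_first_passage)
    fix i assume "i < length v"
    then show "0 \<le> height (take i v)"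
      using pw[of "Suc (length u + i)"] w r u \<open>x = S\<close> by (simp add: height_first_passage)
  qed
  then show thesis using that u w r \<open>x = S\<close> by blast
qed

lemma first_passage_prefix_free:
  assumes "u \<in> first_passage" "u' \<in> first_passage" "u @ v = u' @ v'"
  shows "u = u'"
proof -
  have not_shorter: "\<not> length u < length u'"
    if "u \<in> first_passage" "u' \<in> first_passage" "u @ v = u' @ v'" for u u' v v'
  proof
    assume "length u < length u'"
    moreover have "take (length u) u' = u"
      using that(3) \<open>length u < length u'\<close> by (metis append_eq_append_conv_if less_imp_le_nat)
    moreover have "\<forall>i<length u'. 0 \<le> height (take i u')"
      using that(2) by (simp add: first_passage_def)
    ultimately have "0 \<le> height u" by metis
    then show False using that(1) by (simp add: height_first_passage)
  qed
  have "length u = length u'"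
    using not_shorter[OF assms] not_shorter[OF assms(2,1) assms(3)[symmetric]] by simp
  then show ?thesis using assms(3) by simp
qed

lemma inj_on_join: "inj_on (\<lambda>(u, v). S # u @ v) (first_passage \<times> first_passage)"
  by (rule inj_onI) (auto dest: first_passage_prefix_free)

lemma first_passage_decomposition:
  "first_passage = insert [H] ((\<lambda>(u, v). S # u @ v) ` (first_passage \<times> first_passage))"
proof (intro equalityI subsetI)
  fix w assume "w \<in> first_passage"
  then show "w \<in> insert [H] ((\<lambda>(u, v). S # u @ v) ` (first_passage \<times> first_passage))"
    by (cases "w = [H]") (auto elim: first_passage_split)
qed (auto simp: H_in_first_passage join_in_first_passage)

lemma first_passage_induct [consumes 1, case_names H join]:
  assumes "w \<in> first_passage" "P [H]"
    and "\<And>u v. u \<in> first_passage \<Longrightarrow> v \<in> first_passage \<Longrightarrow> P u \<Longrightarrow> P v \<Longrightarrow> P (S # u @ v)"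
  shows "P w"
  using assms(1)
proof (induction "length w" arbitrary: w rule: less_induct)
  case less
  show ?case
  proof (cases "w = [H]")
    case False
    with less.prems obtain u v where "u \<in> first_passage" "v \<in> first_passage" "w = S # u @ v"
      by (rule first_passage_split)
    then show ?thesis using less.hyps assms(3) by simp
  qed (simp add: assms(2))
qed

definition first_passage_upto :: "nat \<Rightarrow> letter list set" where
  "first_passage_upto N = {w \<in> first_passage. length w \<le> N}"

lemma first_passage_upto_subset: "first_passage_upto N \<subseteq> first_passage"
  by (auto simp: first_passage_upto_def)

lemma finite_first_passage_upto: "finite (first_passage_upto N)"
proof -
  have "finite {w :: letter list. set w \<subseteq> UNIV \<and> length w \<le> N}"
    by (rule finite_lists_length_le) (simp add: UNIV_letter)
  then show ?thesis by (rule rev_finite_subset) (auto simp: first_passage_upto_def)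
qed

lemma first_passage_upto_0: "first_passage_upto 0 = {}"
  using Nil_notin_first_passage by (auto simp: first_passage_upto_def)

lemma first_passage_upto_Suc_subset:
  "first_passage_upto (Suc N)
     \<subseteq> insert [H] ((\<lambda>(u, v). S # u @ v) ` (first_passage_upto N \<times> first_passage_upto N))"
proof
  fix w assume "w \<in> first_passage_upto (Suc N)"
  then have w: "w \<in> first_passage" "length w \<le> Suc N" by (auto simp: first_passage_upto_def)
  show "w \<in> insert [H] ((\<lambda>(u, v). S # u @ v) ` (first_passage_upto N \<times> first_passage_upto N))"
  proof (cases "w = [H]")
    case False
    with w(1) obtain u v where "u \<in> first_passage" "v \<in> first_passage" "w = S # u @ v"
      by (rule first_passage_split)
    then show ?thesis using w(2) by (force simp: first_passage_upto_def)
  qed simp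
qed

lemma sum_first_passage_upto_Suc_le:
  fixes f :: "letter list \<Rightarrow> real"
  assumes "\<And>w. w \<in> first_passage \<Longrightarrow> 0 \<le> f w"
  shows "sum f (first_passage_upto (Suc N))
           \<le> f [H] + (\<Sum>(u, v)\<in>first_passage_upto N \<times> first_passage_upto N. f (S # u @ v))"
proof -
  let ?J = "(\<lambda>(u, v). S # u @ v) ` (first_passage_upto N \<times> first_passage_upto N)"
  have sub: "first_passage_upto N \<times> first_passage_upto N \<subseteq> first_passage \<times> first_passage"
    using first_passage_upto_subset by blast
  have inj: "inj_on (\<lambda>(u, v). S # u @ v) (first_passage_upto N \<times> first_passage_upto N)"
    using inj_on_join sub by (rule inj_on_subset)
  have "sum f (first_passage_upto (Suc N)) \<le> sum f (insert [H] ?J)"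
    using assms sub H_in_first_passage join_in_first_passage finite_first_passage_upto
    by (intro sum_mono2[OF _ first_passage_upto_Suc_subset]) auto
  also have "\<dots> = f [H] + sum f ?J"
    using finite_first_passage_upto by (subst sum.insert) auto
  also have "sum f ?J = (\<Sum>(u, v)\<in>first_passage_upto N \<times> first_passage_upto N. f (S # u @ v))"
    using sum.reindex[OF inj, of f] by (simp add: comp_def case_prod_unfold)
  finally show ?thesis .
qed

lemma summable_on_first_passage:
  fixes f :: "letter list \<Rightarrow> real"
  assumes nonneg: "\<And>w. w \<in> first_passage \<Longrightarrow> 0 \<le> f w"
    and bound: "\<And>N. sum f (first_passage_upto N) \<le> C"
  shows "f summable_on first_passage" and "infsum f first_passage \<le> C"
proof -
  have le: "sum f G \<le> C" if "finite G" "G \<subseteq> first_passage" for G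
  proof -
    have "G \<subseteq> first_passage_upto (Max (length ` G))"
      using that by (auto simp: first_passage_upto_def)
    then have "sum f G \<le> sum f (first_passage_upto (Max (length ` G)))"
      using nonneg finite_first_passage_upto first_passage_upto_subset by (intro sum_mono2) blast+
    then show ?thesis using bound order_trans by blast
  qed
  show "f summable_on first_passage"
    using nonneg le by (intro nonneg_bdd_above_summable_on bdd_aboveI2) auto
  then show "infsum f first_passage \<le> C"
    using le by (rule infsum_le_finite_sums)
qed

lemma has_sum_first_passage_split:
  fixes f :: "letter list \<Rightarrow> real"
  assumes "((\<lambda>(u, v). f (S # u @ v)) has_sum s) (first_passage \<times> first_passage)"
  shows "(f has_sum f [H] + s) first_passage"
proof -
  have "(f has_sum s) ((\<lambda>(u, v). S # u @ v) ` (first_passage \<times> first_passage))"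
    using has_sum_reindex[OF inj_on_join, of f s] assms by (simp add: comp_def case_prod_unfold)
  moreover have "[H] \<notin> (\<lambda>(u, v). S # u @ v) ` (first_passage \<times> first_passage)"
    by auto
  ultimately show ?thesis
    using first_passage_decomposition has_sum_insert by metis
qed

lemma has_sum_product_nonneg:
  fixes a :: "'a \<Rightarrow> real" and b :: "'b \<Rightarrow> real"
  assumes a: "(a has_sum A) X" and b: "(b has_sum B) Y"
    and "\<And>x. x \<in> X \<Longrightarrow> 0 \<le> a x" "\<And>y. y \<in> Y \<Longrightarrow> 0 \<le> b y"
  shows "((\<lambda>(x, y). a x * b y) has_sum A * B) (X \<times> Y)"
proof -
  have inner: "((\<lambda>y. a x * b y) has_sum a x * B) Y" for x
    using b by (rule has_sum_cmult_right)
  have outer: "((\<lambda>x. a x * B) has_sum A * B) X"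
    using a by (rule has_sum_cmult_left)
  have "(\<lambda>(x, y). a x * b y) summable_on X \<times> Y"
    using inner outer assms(3,4) by (intro summable_on_SigmaI) (auto intro: has_sum_imp_summable)
  then show ?thesis
    using inner outer by (intro has_sum_SigmaI) auto
qed

text \<open>\<open>descents_below m w\<close> counts the H-steps of the walk of \<open>w\<close> (started at 0) that end
  strictly below level \<open>m\<close>; the threshold is carried relative to the current position.\<close>
fun descents_below :: "int \<Rightarrow> letter list \<Rightarrow> nat" where
  "descents_below m [] = 0"
| "descents_below m (S # w) = descents_below (m - 1) w"
| "descents_below m (H # w) = (if 0 \<le> m then 1 else 0) + descents_below (m + 1) w"

lemma descents_below_append:
  "descents_below m (u @ v) = descents_below m u + descents_below (m - height u) v"
proof (induction u arbitrary: m)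
  case (Cons x u)
  then show ?case by (cases x) (simp_all add: algebra_simps)
qed simp

lemma card_descents_below:
  "card {i \<in> {1..length w}. height (take i w) < m \<and> height (take i w) < height (take (i - 1) w)}
     = descents_below m w"
proof (induction w rule: rev_induct)
  case (snoc x w)
  let ?P = "\<lambda>w i. height (take i w) < m \<and> height (take i w) < height (take (i - 1) w)"
  let ?new = "if ?P (w @ [x]) (Suc (length w)) then {Suc (length w)} else {}"
  have "{i \<in> {1..length (w @ [x])}. ?P (w @ [x]) i} = {i \<in> {1..length w}. ?P w i} \<union> ?new"
    by (auto simp: le_Suc_eq)
  moreover have "card ({i \<in> {1..length w}. ?P w i} \<union> ?new)
      = card {i \<in> {1..length w}. ?P w i} + (if ?P (w @ [x]) (Suc (length w)) then 1 else 0)"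
    by (subst card_Un_disjoint) auto
  moreover have "descents_below m (w @ [x])
      = descents_below m w + (if ?P (w @ [x]) (Suc (length w)) then 1 else 0)"
    by (cases x) (auto simp: descents_below_append)
  ultimately show ?case using snoc by simp
qed simp

lemma descents_below_join:
  "u \<in> first_passage \<Longrightarrow>
     descents_below m (S # u @ v) = descents_below (m - 1) u + descents_below m v"
  by (simp add: descents_below_append height_first_passage)

text \<open>A first passage never goes below level \<open>-1\<close>.\<close>
lemma descents_below_first_passage_neg:
  "w \<in> first_passage \<Longrightarrow> m < 0 \<Longrightarrow> descents_below m w = 0"
proof (induction w arbitrary: m rule: first_passage_induct)
  case (join u v)
  then show ?case by (simp add: descents_below_join del: descents_below.simps)
qed simp

fun letter_prob :: "real \<Rightarrow> real \<Rightarrow> letter \<Rightarrow> real" where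
  "letter_prob p q S = q"
| "letter_prob p q H = p"

definition word_prob :: "real \<Rightarrow> real \<Rightarrow> letter list \<Rightarrow> real" where
  "word_prob p q w = prod_list (map (letter_prob p q) w)"

lemma word_prob_Nil [simp]: "word_prob p q [] = 1"
  by (simp add: word_prob_def)

lemma word_prob_Cons [simp]: "word_prob p q (x # w) = letter_prob p q x * word_prob p q w"
  by (simp add: word_prob_def)

lemma word_prob_append [simp]: "word_prob p q (u @ v) = word_prob p q u * word_prob p q v"
  by (simp add: word_prob_def)

lemma word_prob_balanced:
  assumes "height w = 0"
  shows "word_prob p q w = (p * q) ^ (length w div 2)"
proof -
  have "word_prob p q w = q ^ count_list w S * p ^ count_list w H
      \<and> height w = int (count_list w S) - int (count_list w H)
      \<and> length w = count_list w S + count_list w H"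
  proof (induction w)
    case (Cons x w)
    then show ?case by (cases x) simp_all
  qed simp
  then show ?thesis
    using assms by (simp add: power_mult_distrib)
qed

lemma SS_cycles_eq: "SS_cycles = (\<lambda>w. S # S # w) ` first_passage"
  by (auto simp: SS_cycles_def first_passage_eq_dyck)

lemma has_sum_SS_cycles:
  assumes "(g has_sum s) first_passage" "\<And>w. w \<in> first_passage \<Longrightarrow> f (S # S # w) = g w"
  shows "(f has_sum s) SS_cycles"
proof -
  have "inj_on (\<lambda>w. S # S # w) first_passage" by (rule inj_onI) simp
  moreover have "((f \<circ> (\<lambda>w. S # S # w)) has_sum s) first_passage \<longleftrightarrow> (g has_sum s) first_passage"
    by (rule has_sum_cong) (simp only: comp_apply assms(2))
  ultimately show ?thesis
    using assms(1) has_sum_reindex unfolding SS_cycles_eq by blast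
qed

lemma cycle_prob_first_passage:
  assumes "w \<in> first_passage"
  shows "cycle_prob p q (S # S # w) = q^2 * word_prob p q w"
proof -
  obtain w' where w: "w = w' @ [H]" "dyck w'" using assms by (auto simp: first_passage_eq_dyck)
  have "length (S # S # w) - 3 = length w'" using w by simp
  then have "cycle_prob p q (S # S # w) = q^2 * p * (p * q) ^ (length w' div 2)"
    by (simp add: cycle_prob_def)
  also have "(p * q) ^ (length w' div 2) = word_prob p q w'"
    using w by (intro word_prob_balanced[symmetric]) (simp add: dyck_def)
  finally show ?thesis using w by simp
qed

lemma Hcount_SS: "Hcount n1 (S # S # w) = descents_below (int n1 - 2) w"
  unfolding Hcount_def Xpos_def using card_descents_below[of w "int n1 - 2"] by simp

lemma sum_Times_mult:
  "(\<Sum>(x, y)\<in>A \<times> B. c * (a x * b y)) = c * (sum a A * (sum b B :: 'c :: comm_semiring_0))"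
proof -
  have "(\<Sum>(x, y)\<in>A \<times> B. c * (a x * b y)) = c * (\<Sum>(x, y)\<in>A \<times> B. a x * b y)"
    by (simp only: sum_distrib_left case_prod_unfold)
  also have "\<dots> = c * (sum a A * sum b B)"
    by (simp add: sum_product sum.cartesian_product)
  finally show ?thesis .
qed

locale biased_walk =
  fixes p q :: real
  assumes p_plus_q: "p + q = 1" and q_pos: "0 < q" and q_less_p: "q < p"
begin

lemma p_pos: "0 < p"
  using q_pos q_less_p by simp

lemma word_prob_nonneg: "0 \<le> word_prob p q w"
proof (induction w)
  case (Cons x w)
  then show ?case using p_pos q_pos by (cases x) simp_all
qed simp

lemma word_prob_join: "word_prob p q (S # u @ v) = q * (word_prob p q u * word_prob p q v)"
  by simp

lemma sum_word_prob_upto_le: "sum (word_prob p q) (first_passage_upto N) \<le> 1"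
proof (induction N)
  case (Suc N)
  let ?s = "sum (word_prob p q) (first_passage_upto N)"
  have "0 \<le> ?s" by (simp add: sum_nonneg word_prob_nonneg)
  have "sum (word_prob p q) (first_passage_upto (Suc N))
      \<le> word_prob p q [H] + (\<Sum>(u, v)\<in>first_passage_upto N \<times> first_passage_upto N. word_prob p q (S # u @ v))"
    by (rule sum_first_passage_upto_Suc_le) (rule word_prob_nonneg)
  also have "\<dots> = p + q * (?s * ?s)"
    by (simp only: word_prob_join sum_Times_mult) simp
  also have "\<dots> \<le> p + q * 1"
    using Suc \<open>0 \<le> ?s\<close> q_pos by (intro add_left_mono mult_left_mono mult_le_one) auto
  finally show ?case using p_plus_q by simp
qed (simp add: first_passage_upto_0)

text \<open>The total mass \<open>\<Phi>\<close> solves \<open>\<Phi> = p + q \<Phi>\<^sup>2\<close>, whose roots are \<open>1\<close> and \<open>p / q > 1\<close>;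
  the truncations show \<open>\<Phi> \<le> 1\<close>.\<close>
lemma has_sum_word_prob: "(word_prob p q has_sum 1) first_passage"
proof -
  define \<Phi> where "\<Phi> = infsum (word_prob p q) first_passage"
  have \<Phi>: "(word_prob p q has_sum \<Phi>) first_passage" "\<Phi> \<le> 1"
    unfolding \<Phi>_def using summable_on_first_passage[OF word_prob_nonneg sum_word_prob_upto_le]
    by (auto intro: has_sum_infsum)
  have "((\<lambda>(u, v). word_prob p q (S # u @ v)) has_sum q * (\<Phi> * \<Phi>)) (first_passage \<times> first_passage)"
    using has_sum_cmult_right[OF has_sum_product_nonneg[OF \<Phi>(1) \<Phi>(1) word_prob_nonneg word_prob_nonneg]]
    by (simp add: case_prod_unfold)
  then have "(word_prob p q has_sum p + q * (\<Phi> * \<Phi>)) first_passage"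
    using has_sum_first_passage_split by fastforce
  then have "\<Phi> = p + q * (\<Phi> * \<Phi>)" using \<Phi>(1) has_sum_unique by blast
  then have "(\<Phi> - 1) * (q * \<Phi> - p) = 0" using p_plus_q by algebra
  moreover have "q * \<Phi> - p < 0" using \<Phi>(2) q_pos q_less_p by (smt (verit) mult_left_le)
  ultimately show ?thesis using \<Phi>(1) by simp
qed

abbreviation descent_mass :: "int \<Rightarrow> letter list \<Rightarrow> real" where
  "descent_mass m w \<equiv> word_prob p q w * real (descents_below m w)"

lemma descent_mass_join:
  "u \<in> first_passage \<Longrightarrow> descent_mass m (S # u @ v)
     = q * (descent_mass (m - 1) u * word_prob p q v) + q * (word_prob p q u * descent_mass m v)"
  by (simp only: descents_below_join word_prob_join) (simp add: algebra_simps)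

lemma sum_descent_mass_join:
  assumes "F \<subseteq> first_passage"
  shows "(\<Sum>(u, v)\<in>F \<times> F. descent_mass m (S # u @ v))
           = q * (sum (descent_mass (m - 1)) F * sum (word_prob p q) F)
             + q * (sum (word_prob p q) F * sum (descent_mass m) F)"
proof -
  have "(\<Sum>(u, v)\<in>F \<times> F. descent_mass m (S # u @ v))
      = (\<Sum>(u, v)\<in>F \<times> F. q * (descent_mass (m - 1) u * word_prob p q v)
                          + q * (word_prob p q u * descent_mass m v))"
  proof (rule sum.cong[OF refl], clarify)
    fix u v assume "u \<in> F"
    then show "descent_mass m (S # u @ v)
        = q * (descent_mass (m - 1) u * word_prob p q v) + q * (word_prob p q u * descent_mass m v)"
      using assms by (intro descent_mass_join) blast
  qed
  also have "\<dots> = (\<Sum>(u, v)\<in>F \<times> F. q * (descent_mass (m - 1) u * word_prob p q v))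
                 + (\<Sum>(u, v)\<in>F \<times> F. q * (word_prob p q u * descent_mass m v))"
    by (simp only: sum.distrib case_prod_unfold)
  finally show ?thesis by (simp only: sum_Times_mult)
qed

lemma descent_bound_fixed_point:
  assumes "B * (p - q) = p"
  shows "p + (q * B + q * B) = B"
proof -
  have "p + (q * B + q * B) - B = B * (p + q - 1) - (B * (p - q) - p)"
    by (simp add: algebra_simps)
  then show ?thesis using assms p_plus_q by simp
qed

lemma sum_descent_mass_upto_le: "sum (descent_mass m) (first_passage_upto N) \<le> p / (p - q)"
proof (induction N arbitrary: m)
  case 0
  show ?case using q_less_p p_pos by (simp add: first_passage_upto_0)
next
  case (Suc N)
  let ?B = "p / (p - q)" and ?F = "first_passage_upto N"
  let ?s = "sum (word_prob p q) ?F"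
  have s: "0 \<le> ?s" "?s \<le> 1" by (simp_all add: sum_nonneg word_prob_nonneg sum_word_prob_upto_le)
  have A: "0 \<le> sum (descent_mass k) ?F" for k by (simp add: sum_nonneg word_prob_nonneg)
  have "sum (descent_mass m) (first_passage_upto (Suc N))
      \<le> descent_mass m [H] + (\<Sum>(u, v)\<in>?F \<times> ?F. descent_mass m (S # u @ v))"
    by (rule sum_first_passage_upto_Suc_le) (simp add: word_prob_nonneg)
  also have "(\<Sum>(u, v)\<in>?F \<times> ?F. descent_mass m (S # u @ v))
      = q * (sum (descent_mass (m - 1)) ?F * ?s) + q * (?s * sum (descent_mass m) ?F)"
    using first_passage_upto_subset by (rule sum_descent_mass_join)
  also have "\<dots> \<le> q * ?B + q * ?B"
    using Suc[of "m - 1"] Suc[of m] s A q_pos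
    by (intro add_mono mult_left_mono) (auto intro: mult_right_le_one_le mult_left_le_one_le order_trans)
  also have "descent_mass m [H] + (q * ?B + q * ?B) \<le> p + (q * ?B + q * ?B)"
    using p_pos by simp
  also have "\<dots> = ?B"
    using descent_bound_fixed_point[of ?B] q_less_p by simp
  finally show ?case by simp
qed

lemma has_sum_descent_mass:
  "(descent_mass (int n - 1) has_sum (\<Sum>k<n. (q / p) ^ k)) first_passage"
proof (induction n)
  case 0
  have "(descent_mass (-1) has_sum 0) first_passage"
    by (rule has_sum_0) (simp add: descents_below_first_passage_neg)
  then show ?case by simp
next
  case (Suc n)
  let ?G = "\<Sum>k<n. (q / p) ^ k"
  define E where "E = infsum (descent_mass (int n)) first_passage"
  have E: "(descent_mass (int n) has_sum E) first_passage"
    unfolding E_def using sum_descent_mass_upto_le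
    by (intro has_sum_infsum summable_on_first_passage(1)) (simp_all add: word_prob_nonneg)
  have "((\<lambda>(u, v). q * (descent_mass (int n - 1) u * word_prob p q v)) has_sum q * (?G * 1))
      (first_passage \<times> first_passage)"
    using has_sum_cmult_right[OF has_sum_product_nonneg[OF Suc has_sum_word_prob _ word_prob_nonneg]]
    by (simp add: case_prod_unfold word_prob_nonneg)
  moreover have "((\<lambda>(u, v). q * (word_prob p q u * descent_mass (int n) v)) has_sum q * (1 * E))
      (first_passage \<times> first_passage)"
    using has_sum_cmult_right[OF has_sum_product_nonneg[OF has_sum_word_prob E word_prob_nonneg]]
    by (simp add: case_prod_unfold word_prob_nonneg)
  ultimately have "((\<lambda>(u, v). descent_mass (int n) (S # u @ v)) has_sum q * (?G * 1) + q * (1 * E))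
      (first_passage \<times> first_passage)"
    by (rule has_sum_cong[THEN iffD1, rotated, OF has_sum_add])
       (clarify, simp only: case_prod_conv descent_mass_join)
  then have "(descent_mass (int n) has_sum p + (q * (?G * 1) + q * (1 * E))) first_passage"
    using has_sum_first_passage_split by fastforce
  then have "E = p + (q * ?G + q * E)" using E has_sum_unique by fastforce
  then have "E * p = p + q * ?G" using p_plus_q by algebra
  then have "E = 1 + (q / p) * ?G" using p_pos by (simp add: field_simps)
  also have "\<dots> = (\<Sum>k<Suc n. (q / p) ^ k)"
    by (simp only: sum.lessThan_Suc_shift power_0 power_Suc sum_distrib_left)
  finally show ?case using E by simp
qed

end

theorem proposition6:
  fixes p q :: real and n1 :: nat
  assumes "p + q = 1" and "0 < q" and "q < p" and "n1 \<ge> 2"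
  shows "(\<Sum>\<^sub>\<infinity>\<omega>\<in>SS_cycles. cycle_prob p q \<omega> * real (Hcount n1 \<omega>))
           / (\<Sum>\<^sub>\<infinity>\<omega>\<in>SS_cycles. cycle_prob p q \<omega>)
         = p / (p - q) * (1 - (q / p) ^ (n1 - 1))"
proof -
  interpret biased_walk p q using assms by unfold_locales
  have level: "int (n1 - 1) - 1 = int n1 - 2" using assms(4) by simp
  have "((\<lambda>\<omega>. cycle_prob p q \<omega> * real (Hcount n1 \<omega>)) has_sum q^2 * (\<Sum>k<n1 - 1. (q / p) ^ k))
      SS_cycles"
    using has_sum_cmult_right[OF has_sum_descent_mass[of "n1 - 1", unfolded level]]
    by (rule has_sum_SS_cycles) (simp add: cycle_prob_first_passage Hcount_SS)
  moreover have "(cycle_prob p q has_sum q^2 * 1) SS_cycles"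
    using has_sum_cmult_right[OF has_sum_word_prob]
    by (rule has_sum_SS_cycles) (simp add: cycle_prob_first_passage)
  moreover have "(\<Sum>k<n1 - 1. (q / p) ^ k) = (1 - (q / p) ^ (n1 - 1)) / (1 - q / p)"
    using assms(3) by (simp add: sum_gp_strict)
  moreover have "1 - q / p = (p - q) / p"
    using p_pos by (simp add: field_simps)
  ultimately show ?thesis
    using assms(2) by (simp add: infsumI)
qed

end
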